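(* Let $k$ be odd. Let $F$ be the set of the $2n$ frame positions, partitioned into the $n$ pairs $\{p,p'\}$ where $p,p'\in F$ have the same set $B(p)=B(p')=\{s\}$ and $\{p_s,p'_s\}=\{0,k-1\}$. Then for every combination $g$: $g(F)=F$; $g$ maps each pair onto a pair (so the partition of the $2n$ frame cubies into pairs is preserved, and its index $B_1$ among the $(2n)!/(2^n n!)$ partitions of $2n$ objects into pairs is invariant); and $\operatorname{sgn}(g|_F)\cdot\operatorname{sgn}(\hat g)=1$, where $\hat g$ is the permutation of the set of $n$ pairs induced by $g$ (so $B_2=\operatorname{sgn}(\sigma_c)\operatorname{sgn}(\sigma_p)$ is invariant).
   Context: Fix integers $k\ge2$, $n\ge3$, $M=\{0,\dots,k-1\}$. Positions are $p\in M^n$; $B(p)=\{i:p_i\in\{0,k-1\}\}$. For distinct $i,j$, $\psi_{i,j}:M^n\to M^n$ is $(\psi_{i,j}p)_i=k-1-p_j$, $(\psi_{i,j}p)_j=p_i$, other coordinates unchanged. A move is given by distinct $i,j$ and constants $c_l\in M$ ($l\notin\{i,j\}$): it sends each position $p$ with $p_l=c_l$ ($l\notin\{i,j\}$) to $\psi_{i,j}(p)$ and fixes the other positions; a combination is a finite sequence of moves, regarded as the composite permutation of positions. For odd $k$, the frame positions are those with exactly one coordinate in $\{0,k-1\}$ and all other coordinates equal to $(k-1)/2$. For two states of the frame, $\sigma_c$ denotes the permutation of frame cubies and $\sigma_p$ the permutation of pairs relating them. *)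

theory Defs
  imports "HOL-Combinatorics.Permutations"
begin

text \<open>Positions in M^n are encoded as functions nat => nat, with p i < k for i < n
  and p i = 0 for i >= n (coordinates 0..n-1).\<close>

definition positions :: "nat \<Rightarrow> nat \<Rightarrow> (nat \<Rightarrow> nat) set" where
  "positions k n = {p. (\<forall>i<n. p i < k) \<and> (\<forall>i. n \<le> i \<longrightarrow> p i = 0)}"

definition Bset :: "nat \<Rightarrow> nat \<Rightarrow> (nat \<Rightarrow> nat) \<Rightarrow> nat set" where
  "Bset k n p = {i. i < n \<and> (p i = 0 \<or> p i = k - 1)}"

definition psi :: "nat \<Rightarrow> nat \<Rightarrow> nat \<Rightarrow> (nat \<Rightarrow> nat) \<Rightarrow> (nat \<Rightarrow> nat)" where
  "psi k i j p = p(i := k - 1 - p j, j := p i)"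

definition move :: "nat \<Rightarrow> nat \<Rightarrow> nat \<Rightarrow> nat \<Rightarrow> (nat \<Rightarrow> nat) \<Rightarrow> (nat \<Rightarrow> nat) \<Rightarrow> (nat \<Rightarrow> nat)" where
  "move k n i j c p =
     (if \<forall>l<n. l \<noteq> i \<and> l \<noteq> j \<longrightarrow> p l = c l then psi k i j p else p)"

definition valid_move :: "nat \<Rightarrow> nat \<Rightarrow> nat \<Rightarrow> nat \<Rightarrow> (nat \<Rightarrow> nat) \<Rightarrow> bool" where
  "valid_move k n i j c \<longleftrightarrow> i < n \<and> j < n \<and> i \<noteq> j \<and> (\<forall>l<n. l \<noteq> i \<and> l \<noteq> j \<longrightarrow> c l < k)"

inductive combination :: "nat \<Rightarrow> nat \<Rightarrow> ((nat \<Rightarrow> nat) \<Rightarrow> (nat \<Rightarrow> nat)) \<Rightarrow> bool"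
  for k n where
  comb_id: "combination k n id"
| comb_step: "combination k n g \<Longrightarrow> valid_move k n i j c \<Longrightarrow> combination k n (move k n i j c \<circ> g)"

definition frame :: "nat \<Rightarrow> nat \<Rightarrow> (nat \<Rightarrow> nat) set" where
  "frame k n = {p \<in> positions k n. card (Bset k n p) = 1 \<and>
      (\<forall>i<n. i \<notin> Bset k n p \<longrightarrow> p i = (k - 1) div 2)}"

definition frame_pairs :: "nat \<Rightarrow> nat \<Rightarrow> (nat \<Rightarrow> nat) set set" where
  "frame_pairs k n = {{p, q} | p q. p \<in> frame k n \<and> q \<in> frame k n \<and>
      (\<exists>s. Bset k n p = {s} \<and> Bset k n q = {s} \<and> {p s, q s} = {0, k - 1})}"

definition restr_frame :: "nat \<Rightarrow> nat \<Rightarrow> ((nat \<Rightarrow> nat) \<Rightarrow> (nat \<Rightarrow> nat)) \<Rightarrow> (nat \<Rightarrow> nat) \<Rightarrow> (nat \<Rightarrow> nat)" where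
  "restr_frame k n g = (\<lambda>p. if p \<in> frame k n then g p else p)"

definition pair_perm :: "nat \<Rightarrow> nat \<Rightarrow> ((nat \<Rightarrow> nat) \<Rightarrow> (nat \<Rightarrow> nat)) \<Rightarrow> (nat \<Rightarrow> nat) set \<Rightarrow> (nat \<Rightarrow> nat) set" where
  "pair_perm k n g = (\<lambda>P. if P \<in> frame_pairs k n then g ` P else P)"

end

theory Submission
  imports Defs
begin

text \<open>Only the moves whose fixed coordinates all equal the middle value (k - 1) div 2
  move frame cubies at all. Such a move on the slice through coordinates i and j acts on
  the frame as the 4-cycle of the four cubies with B = {i} or B = {j}, an odd permutation,
  and on the pairs as the transposition of the pairs at i and j, again odd. Every move
  therefore contributes (-1) * (-1) = 1 to the product of the two signs, and the induced
  maps on cubies and on pairs are multiplicative along a combination.\<close>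

lemma restr_frame_eq_id:
  assumes "\<forall>p \<in> frame k n. g p = p"
  shows "restr_frame k n g = id"
  using assms by (auto simp: restr_frame_def)

lemma pair_perm_eq_id:
  assumes "\<forall>p \<in> frame k n. g p = p"
  shows "pair_perm k n g = id"
proof -
  have "g ` P = P" if "P \<in> frame_pairs k n" for P
    using that assms unfolding frame_pairs_def by auto
  then show ?thesis by (auto simp: pair_perm_def fun_eq_iff)
qed

lemma restr_frame_comp:
  assumes "g ` frame k n \<subseteq> frame k n"
  shows "restr_frame k n (h \<circ> g) = restr_frame k n h \<circ> restr_frame k n g"
  using assms by (auto simp: restr_frame_def fun_eq_iff)

lemma pair_perm_comp:
  assumes "\<forall>P \<in> frame_pairs k n. g ` P \<in> frame_pairs k n"
  shows "pair_perm k n (h \<circ> g) = pair_perm k n h \<circ> pair_perm k n g"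
  using assms by (auto simp: pair_perm_def image_comp fun_eq_iff)

lemma image_frame_eq_if_restr_frame_permutes:
  assumes "restr_frame k n g permutes frame k n"
  shows "g ` frame k n = frame k n"
proof -
  have "g ` frame k n = restr_frame k n g ` frame k n"
    by (auto simp: restr_frame_def)
  then show ?thesis using permutes_image[OF assms] by simp
qed

lemma image_in_frame_pairs_if_pair_perm_permutes:
  assumes "pair_perm k n g permutes frame_pairs k n" and "P \<in> frame_pairs k n"
  shows "g ` P \<in> frame_pairs k n"
  using permutes_in_image[OF assms(1), of P] assms(2) by (simp add: pair_perm_def)

definition frame_balanced :: "nat \<Rightarrow> nat \<Rightarrow> ((nat \<Rightarrow> nat) \<Rightarrow> (nat \<Rightarrow> nat)) \<Rightarrow> bool" where
  "frame_balanced k n g \<longleftrightarrow>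
     restr_frame k n g permutes frame k n \<and> pair_perm k n g permutes frame_pairs k n
     \<and> sign (restr_frame k n g) * sign (pair_perm k n g) = 1"

lemma frame_balanced_id: "frame_balanced k n id"
proof -
  have "restr_frame k n id = id" "pair_perm k n id = id"
    by (simp_all add: restr_frame_eq_id pair_perm_eq_id)
  then show ?thesis by (simp add: frame_balanced_def)
qed

lemma frame_balanced_comp:
  assumes "finite (frame k n)" "finite (frame_pairs k n)"
    and "frame_balanced k n h" "frame_balanced k n g"
  shows "frame_balanced k n (h \<circ> g)"
proof -
  let ?r = "restr_frame k n" and ?q = "pair_perm k n"
  have h: "?r h permutes frame k n" "?q h permutes frame_pairs k n" "sign (?r h) * sign (?q h) = 1"
    and g: "?r g permutes frame k n" "?q g permutes frame_pairs k n" "sign (?r g) * sign (?q g) = 1"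
    using assms(3,4) by (simp_all add: frame_balanced_def)
  have r: "?r (h \<circ> g) = ?r h \<circ> ?r g"
    by (simp add: restr_frame_comp image_frame_eq_if_restr_frame_permutes[OF g(1)])
  have q: "?q (h \<circ> g) = ?q h \<circ> ?q g"
    by (simp add: pair_perm_comp image_in_frame_pairs_if_pair_perm_permutes[OF g(2)])
  have "permutation (?r h)" "permutation (?r g)" "permutation (?q h)" "permutation (?q g)"
    using assms(1,2) h g by (auto simp: permutation_permutes)
  then have "sign (?r (h \<circ> g)) * sign (?q (h \<circ> g))
      = (sign (?r h) * sign (?q h)) * (sign (?r g) * sign (?q g))"
    by (simp add: r q sign_compose)
  then show ?thesis
    using h g by (simp add: frame_balanced_def r q permutes_compose)
qed

locale odd_cube =
  fixes k n :: nat
  assumes two_le_k: "2 \<le> k" and odd_k: "odd k"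
begin

lemma mid_ne_0: "(k - 1) div 2 \<noteq> 0"
  and mid_ne_max: "(k - 1) div 2 \<noteq> k - 1"
  and reflect_mid: "k - 1 - (k - 1) div 2 = (k - 1) div 2"
  and mid_less: "(k - 1) div 2 < k"
  and zero_ne_max: "0 \<noteq> k - 1"
  using two_le_k odd_k by (auto elim!: oddE)

definition frame_pos :: "nat \<Rightarrow> nat \<Rightarrow> nat \<Rightarrow> nat" where
  "frame_pos s e = (\<lambda>l. if l = s then e else if l < n then (k - 1) div 2 else 0)"

definition frame_pair :: "nat \<Rightarrow> (nat \<Rightarrow> nat) set" where
  "frame_pair s = {frame_pos s 0, frame_pos s (k - 1)}"

lemma Bset_frame_pos: "s < n \<Longrightarrow> e \<in> {0, k - 1} \<Longrightarrow> Bset k n (frame_pos s e) = {s}"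
  using mid_ne_0 mid_ne_max by (auto simp: Bset_def frame_pos_def)

lemma frame_pos_eq_iff:
  assumes "s < n" "e \<in> {0, k - 1}"
  shows "frame_pos s e = frame_pos s' e' \<longleftrightarrow> s = s' \<and> e = e'"
proof
  assume "frame_pos s e = frame_pos s' e'"
  then have at_s: "frame_pos s e s = frame_pos s' e' s" by simp
  then have "s = s'"
    using assms mid_ne_0 mid_ne_max by (auto simp: frame_pos_def split: if_splits)
  with at_s show "s = s' \<and> e = e'" by (simp add: frame_pos_def)
qed simp

lemma frame_eq_image: "frame k n = (\<lambda>(s, e). frame_pos s e) ` ({..<n} \<times> {0, k - 1})"
proof (intro equalityI subsetI)
  fix p assume p: "p \<in> frame k n"
  then obtain s where s: "Bset k n p = {s}"
    unfolding frame_def by (auto simp: card_1_singleton_iff)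
  then have "s < n" "p s \<in> {0, k - 1}" unfolding Bset_def by auto
  moreover have "p = frame_pos s (p s)"
    using p s unfolding frame_def positions_def frame_pos_def by auto
  ultimately show "p \<in> (\<lambda>(s, e). frame_pos s e) ` ({..<n} \<times> {0, k - 1})" by force
next
  fix p assume "p \<in> (\<lambda>(s, e). frame_pos s e) ` ({..<n} \<times> {0, k - 1})"
  then obtain s e where "p = frame_pos s e" "s < n" "e \<in> {0, k - 1}" by auto
  then show "p \<in> frame k n"
    using Bset_frame_pos mid_ne_0 mid_ne_max mid_less two_le_k
    by (auto simp: frame_def positions_def frame_pos_def)
qed

lemma frame_pos_in_frame: "s < n \<Longrightarrow> e \<in> {0, k - 1} \<Longrightarrow> frame_pos s e \<in> frame k n"
  by (auto simp: frame_eq_image)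

lemma frame_pairs_eq_image: "frame_pairs k n = frame_pair ` {..<n}"
proof (intro equalityI subsetI)
  fix P assume "P \<in> frame_pairs k n"
  then obtain p q s where P: "P = {p, q}" and pq: "p \<in> frame k n" "q \<in> frame k n"
    and B: "Bset k n p = {s}" "Bset k n q = {s}" "{p s, q s} = {0, k - 1}"
    unfolding frame_pairs_def by blast
  obtain s1 e1 where p: "p = frame_pos s1 e1" "s1 < n" "e1 \<in> {0, k - 1}"
    using pq(1) by (auto simp: frame_eq_image)
  obtain s2 e2 where q: "q = frame_pos s2 e2" "s2 < n" "e2 \<in> {0, k - 1}"
    using pq(2) by (auto simp: frame_eq_image)
  have "s1 = s" "s2 = s" using B p q Bset_frame_pos by auto
  with B(3) p q have "{e1, e2} = {0, k - 1}" by (simp add: frame_pos_def)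
  with P p q \<open>s1 = s\<close> \<open>s2 = s\<close> have "P = frame_pair s"
    by (auto simp: frame_pair_def doubleton_eq_iff)
  then show "P \<in> frame_pair ` {..<n}" using p(2) \<open>s1 = s\<close> by auto
next
  fix P assume "P \<in> frame_pair ` {..<n}"
  then obtain s where s: "s < n" "P = frame_pair s" by auto
  have "frame_pos s 0 \<in> frame k n" "frame_pos s (k - 1) \<in> frame k n"
    "Bset k n (frame_pos s 0) = {s}" "Bset k n (frame_pos s (k - 1)) = {s}"
    "{frame_pos s 0 s, frame_pos s (k - 1) s} = {0, k - 1}"
    using s(1) frame_pos_in_frame Bset_frame_pos by (simp_all add: frame_pos_def)
  then show "P \<in> frame_pairs k n"
    unfolding frame_pairs_def s(2) frame_pair_def by blast
qed

lemma frame_pair_eq_iff: "s < n \<Longrightarrow> frame_pair s = frame_pair s' \<longleftrightarrow> s = s'"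
  by (auto simp: frame_pair_def doubleton_eq_iff frame_pos_eq_iff zero_ne_max)

lemma finite_frame: "finite (frame k n)"
  by (simp add: frame_eq_image)

lemma finite_frame_pairs: "finite (frame_pairs k n)"
  by (simp add: frame_pairs_eq_image)

definition central_move :: "nat \<Rightarrow> nat \<Rightarrow> (nat \<Rightarrow> nat) \<Rightarrow> bool" where
  "central_move i j c \<longleftrightarrow> (\<forall>l<n. l \<noteq> i \<and> l \<noteq> j \<longrightarrow> c l = (k - 1) div 2)"

lemma psi_frame_pos:
  assumes "i < n" "j < n" "i \<noteq> j"
  shows "psi k i j (frame_pos s e) =
    (if s = i then frame_pos j e else if s = j then frame_pos i (k - 1 - e) else frame_pos s e)"
  using assms reflect_mid by (auto simp: psi_def frame_pos_def)

lemma move_frame_pos: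
  assumes "valid_move k n i j c"
  shows "move k n i j c (frame_pos s e) =
    (if central_move i j c then psi k i j (frame_pos s e) else frame_pos s e)"
proof (cases "s = i \<or> s = j")
  case True
  then have "frame_pos s e l = (k - 1) div 2" if "l < n" "l \<noteq> i \<and> l \<noteq> j" for l
    using that by (auto simp: frame_pos_def)
  then have "(\<forall>l<n. l \<noteq> i \<and> l \<noteq> j \<longrightarrow> frame_pos s e l = c l) \<longleftrightarrow> central_move i j c"
    unfolding central_move_def by auto
  then show ?thesis by (simp only: move_def)
next
  case False
  with assms have "psi k i j (frame_pos s e) = frame_pos s e"
    by (simp add: psi_frame_pos valid_move_def)
  then show ?thesis by (simp add: move_def)
qed

text \<open>The 4-cycle (i,0) \<mapsto> (j,0) \<mapsto> (i,k-1) \<mapsto> (j,k-1) \<mapsto> (i,0),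
  writing (s,e) for frame_pos s e.\<close>

lemma restr_frame_central_move:
  assumes "valid_move k n i j c" "central_move i j c"
  shows "restr_frame k n (move k n i j c) =
    transpose (frame_pos i 0) (frame_pos j 0) \<circ> transpose (frame_pos j 0) (frame_pos i (k - 1))
      \<circ> transpose (frame_pos i (k - 1)) (frame_pos j (k - 1))"
proof
  fix p
  have ij: "i < n" "j < n" "i \<noteq> j" using assms(1) by (auto simp: valid_move_def)
  show "restr_frame k n (move k n i j c) p = (transpose (frame_pos i 0) (frame_pos j 0)
      \<circ> transpose (frame_pos j 0) (frame_pos i (k - 1))
      \<circ> transpose (frame_pos i (k - 1)) (frame_pos j (k - 1))) p"
  proof (cases "p \<in> frame k n")
    case True
    then obtain s e where p: "p = frame_pos s e" "s < n" "e \<in> {0, k - 1}"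
      by (auto simp: frame_eq_image)
    with ij assms zero_ne_max show ?thesis
      by (auto simp: restr_frame_def move_frame_pos psi_frame_pos transpose_def frame_pos_eq_iff
          frame_pos_in_frame)
  next
    case False
    with ij have "p \<noteq> frame_pos i e" "p \<noteq> frame_pos j e" if "e \<in> {0, k - 1}" for e
      using frame_pos_in_frame that by auto
    with False show ?thesis by (simp add: restr_frame_def transpose_def)
  qed
qed

lemma pair_perm_central_move:
  assumes "valid_move k n i j c" "central_move i j c"
  shows "pair_perm k n (move k n i j c) = transpose (frame_pair i) (frame_pair j)"
proof
  fix P
  have ij: "i < n" "j < n" "i \<noteq> j" using assms(1) by (auto simp: valid_move_def)
  have move_pair: "move k n i j c ` frame_pair s =
      (if s = i then frame_pair j else if s = j then frame_pair i else frame_pair s)" for s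
    using assms ij by (auto simp: frame_pair_def move_frame_pos psi_frame_pos)
  show "pair_perm k n (move k n i j c) P = transpose (frame_pair i) (frame_pair j) P"
  proof (cases "P \<in> frame_pairs k n")
    case True
    then obtain s where "s < n" "P = frame_pair s" by (auto simp: frame_pairs_eq_image)
    with True ij show ?thesis
      by (auto simp: pair_perm_def move_pair transpose_def frame_pair_eq_iff)
  next
    case False
    with ij have "P \<noteq> frame_pair i" "P \<noteq> frame_pair j" by (auto simp: frame_pairs_eq_image)
    with False show ?thesis by (simp add: pair_perm_def transpose_def)
  qed
qed

lemma move_fixes_frame_if_not_central:
  assumes "valid_move k n i j c" "\<not> central_move i j c"
  shows "\<forall>p \<in> frame k n. move k n i j c p = p"
  using assms by (auto simp: frame_eq_image move_frame_pos)

lemma frame_balanced_move: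
  assumes "valid_move k n i j c"
  shows "frame_balanced k n (move k n i j c)"
proof (cases "central_move i j c")
  case True
  have ij: "i < n" "j < n" "i \<noteq> j" using assms by (auto simp: valid_move_def)
  let ?r = "restr_frame k n (move k n i j c)" and ?q = "pair_perm k n (move k n i j c)"
  have "frame_pos i 0 \<in> frame k n" "frame_pos j 0 \<in> frame k n"
    "frame_pos i (k - 1) \<in> frame k n" "frame_pos j (k - 1) \<in> frame k n"
    using ij frame_pos_in_frame by simp_all
  then have r_permutes: "?r permutes frame k n"
    using assms True by (simp add: restr_frame_central_move permutes_compose permutes_swap_id)
  have "frame_pos i 0 \<noteq> frame_pos j 0" "frame_pos j 0 \<noteq> frame_pos i (k - 1)"
    "frame_pos i (k - 1) \<noteq> frame_pos j (k - 1)"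
    using ij zero_ne_max frame_pos_eq_iff by auto
  then have r_sign: "sign ?r = - 1"
    using assms True
    by (simp add: restr_frame_central_move sign_compose permutation_compose permutation_swap_id
        sign_swap_id)
  have "frame_pair i \<in> frame_pairs k n" "frame_pair j \<in> frame_pairs k n"
    using ij by (auto simp: frame_pairs_eq_image)
  then have q_permutes: "?q permutes frame_pairs k n"
    using assms True by (simp add: pair_perm_central_move permutes_swap_id)
  have "frame_pair i \<noteq> frame_pair j" using ij frame_pair_eq_iff by auto
  then have q_sign: "sign ?q = - 1"
    using assms True by (simp add: pair_perm_central_move sign_swap_id)
  from r_permutes r_sign q_permutes q_sign show ?thesis by (simp add: frame_balanced_def)
next
  case False
  with assms have "\<forall>p \<in> frame k n. move k n i j c p = p"
    by (rule move_fixes_frame_if_not_central)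
  then have "restr_frame k n (move k n i j c) = id" "pair_perm k n (move k n i j c) = id"
    by (rule restr_frame_eq_id, rule pair_perm_eq_id)
  then show ?thesis by (simp add: frame_balanced_def)
qed

lemma frame_balanced_combination: "combination k n g \<Longrightarrow> frame_balanced k n g"
proof (induction rule: combination.induct)
  case comb_id
  show ?case by (rule frame_balanced_id)
next
  case (comb_step g i j c)
  then show ?case
    by (intro frame_balanced_comp finite_frame finite_frame_pairs frame_balanced_move)
qed

end

theorem mainTheorem9:
  fixes k n :: nat and g :: "(nat \<Rightarrow> nat) \<Rightarrow> (nat \<Rightarrow> nat)"
  assumes "k \<ge> 2" and "n \<ge> 3" and "odd k"
    and "combination k n g"
  shows "g ` frame k n = frame k n
    \<and> (\<forall>P \<in> frame_pairs k n. g ` P \<in> frame_pairs k n)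
    \<and> sign (restr_frame k n g) * sign (pair_perm k n g) = 1"
proof -
  interpret odd_cube k n using assms(1,3) by unfold_locales
  have "frame_balanced k n g" using assms(4) by (rule frame_balanced_combination)
  then show ?thesis
    unfolding frame_balanced_def
    using image_frame_eq_if_restr_frame_permutes image_in_frame_pairs_if_pair_perm_permutes
    by blast
qed

end
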